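(* For $n\geq 3$, there is no u-p-word for $n$-permutations containing exactly one occurrence of $\Diamond$.
   Context: An $n$-permutation is a permutation of $\{1,\ldots,n\}$. For a word $w$ of distinct numbers, $\mathrm{red}(w)$ is obtained by replacing the $i$-th smallest letter by $i$. Let $\Diamond$ be a symbol not among the integers. A word $f_1\cdots f_n$ over the positive integers together with $\Diamond$, whose integer letters are pairwise distinct, covers an $n$-permutation $\pi$ if one can substitute real numbers for the occurrences of $\Diamond$ (independently) so that the resulting word has $n$ pairwise distinct entries and reduces to $\pi$; equivalently, $f_i<f_j\iff\pi_i<\pi_j$ for all positions $i,j$ holding integers. A u-p-word for $n$-permutations is a word $u_1\cdots u_N$, $N\geq n$, over this alphabet containing at least one $\Diamond$, such that every factor $u_i\cdots u_{i+n-1}$ ($1\leq i\leq N-n+1$) has pairwise distinct integer letters and every $n$-permutation is covered by exactly one of these factors. *)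

theory Defs
  imports Main
begin

text \<open>Words over the positive integers together with the hole symbol Diamond.
  A letter is an element of type nat option: None is Diamond, Some k is the integer k.\<close>

type_synonym pword = "nat option list"

definition is_perm :: "nat \<Rightarrow> nat list \<Rightarrow> bool" where
  "is_perm n p \<longleftrightarrow> length p = n \<and> distinct p \<and> set p = {1..n}"

definition int_letters_distinct :: "pword \<Rightarrow> bool" where
  "int_letters_distinct f \<longleftrightarrow>
     (\<forall>i<length f. \<forall>j<length f. i \<noteq> j \<longrightarrow> f ! i \<noteq> None \<longrightarrow> f ! i \<noteq> f ! j)"

definition covers :: "pword \<Rightarrow> nat list \<Rightarrow> bool" where
  "covers f p \<longleftrightarrow> length f = length p \<and> int_letters_distinct f \<and>
     (\<forall>i<length f. \<forall>j<length f. \<forall>a b. f ! i = Some a \<longrightarrow> f ! j = Some b \<longrightarrow>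
        (a < b \<longleftrightarrow> p ! i < p ! j))"

definition factor :: "pword \<Rightarrow> nat \<Rightarrow> nat \<Rightarrow> pword" where
  "factor u n i = take n (drop i u)"

definition is_upword :: "nat \<Rightarrow> pword \<Rightarrow> bool" where
  "is_upword n u \<longleftrightarrow>
     length u \<ge> n \<and> None \<in> set u \<and> (\<forall>k. Some k \<in> set u \<longrightarrow> k \<ge> 1) \<and>
     (\<forall>i. i + n \<le> length u \<longrightarrow> int_letters_distinct (factor u n i)) \<and>
     (\<forall>p. is_perm n p \<longrightarrow> (\<exists>!i. i + n \<le> length u \<and> covers (factor u n i) p))"

end

(* Let the hole sit at position d of a word of length N. A window avoiding the hole covers at most
   one permutation and a window containing it at most n, so if every window contains the hole, the
   at most n - 2 windows cover fewer than n! permutations. Otherwise, after reversing the word if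
   necessary, the window starting at the hole fits into the word. Consider the n permutations whose
   first n - 1 entries are ordered like the n - 1 letters after the hole. No window j other than 0
   and d + 1 covers one of them: prepending the letter in front of window j would give a
   permutation covered both by window j - 1 and by the window starting at the hole. The hole-free
   window d + 1 covers at most one of them, and a case analysis on d shows that window 0 covers at
   most n - 2 of them (for n = 3 and d > 0, the windows starting at d - 1 and at d cover a common
   permutation). So one of the n permutations is not covered. *)

theory Submission
  imports Defs "HOL-Combinatorics.Multiset_Permutations"
begin

lemma Collect_is_perm: "{p. is_perm n p} = permutations_of_set {1..n}"
  by (auto simp: is_perm_def permutations_of_set_def distinct_card[symmetric])

lemma finite_is_perm: "finite {p. is_perm n p}"
  by (simp add: Collect_is_perm)

lemma card_is_perm: "card {p. is_perm n p} = fact n"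
  by (simp add: Collect_is_perm)

lemma is_permI:
  assumes "length p = n" "distinct p" "set p \<subseteq> {1..n}"
  shows "is_perm n p"
proof -
  have "card (set p) = card {1..n}" using assms(1,2) by (simp add: distinct_card)
  then have "set p = {1..n}" using assms(3) by (intro card_subset_eq) auto
  then show ?thesis using assms(1,2) by (simp add: is_perm_def)
qed

lemma is_perm_rev [simp]: "is_perm n (rev p) \<longleftrightarrow> is_perm n p"
  by (simp add: is_perm_def)

lemma is_perm_nth_in: "is_perm n p \<Longrightarrow> l < n \<Longrightarrow> p ! l \<in> {1..n}"
  by (auto simp: is_perm_def dest!: nth_mem)

lemma is_perm_nth_eq_iff: "is_perm n p \<Longrightarrow> a < n \<Longrightarrow> b < n \<Longrightarrow> p ! a = p ! b \<longleftrightarrow> a = b"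
  by (auto simp: is_perm_def nth_eq_iff_index_eq)

lemma is_perm_nth_eq_card:
  assumes "is_perm n p" "l < n"
  shows "p ! l = card {m. m < n \<and> p ! m \<le> p ! l}"
proof -
  have len: "length p = n" and set_p: "set p = {1..n}"
    using assms(1) by (auto simp: is_perm_def)
  have "inj_on (nth p) {m. m < n \<and> p ! m \<le> p ! l}"
    using assms(1) by (auto simp: inj_on_def is_perm_nth_eq_iff)
  moreover have "nth p ` {m. m < n \<and> p ! m \<le> p ! l} = {1..p ! l}"
  proof (intro equalityI subsetI)
    fix x assume "x \<in> {1..p ! l}"
    then have "x \<in> set p" using is_perm_nth_in[OF assms] set_p by auto
    then obtain m where "m < n" "p ! m = x" using len by (auto simp: in_set_conv_nth)
    then show "x \<in> nth p ` {m. m < n \<and> p ! m \<le> p ! l}" using \<open>x \<in> {1..p ! l}\<close> by auto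
  qed (use is_perm_nth_in[OF assms(1)] in auto)
  ultimately show ?thesis by (metis card_atLeastAtMost card_image diff_Suc_1)
qed

lemma is_perm_eqI:
  assumes "is_perm n p" "is_perm n q"
    and "\<And>a b. a < n \<Longrightarrow> b < n \<Longrightarrow> p ! a < p ! b \<longleftrightarrow> q ! a < q ! b"
  shows "p = q"
proof (rule nth_equalityI)
  show "length p = length q" using assms by (simp add: is_perm_def)
  fix l assume "l < length p"
  then have l: "l < n" using assms by (simp add: is_perm_def)
  have "{m. m < n \<and> p ! m \<le> p ! l} = {m. m < n \<and> q ! m \<le> q ! l}"
    using assms(3)[OF _ l] assms(3)[OF l] by (auto simp: not_less[symmetric])
  then show "p ! l = q ! l"
    using is_perm_nth_eq_card[OF assms(1) l] is_perm_nth_eq_card[OF assms(2) l] by simp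
qed

definition red :: "nat list \<Rightarrow> nat list" where
  "red xs = map (\<lambda>x. card {y \<in> set xs. y \<le> x}) xs"

lemma red_less_iff:
  assumes "a < length xs" "b < length xs"
  shows "red xs ! a < red xs ! b \<longleftrightarrow> xs ! a < xs ! b"
proof -
  have mono: "card {y \<in> set xs. y \<le> x} < card {y \<in> set xs. y \<le> x'}"
    if "x' \<in> set xs" "x < x'" for x x'
  proof (rule psubset_card_mono)
    show "{y \<in> set xs. y \<le> x} \<subset> {y \<in> set xs. y \<le> x'}"
      using that by (auto simp: set_eq_iff) (metis less_le_not_le order_refl)
  qed simp
  have "card {y \<in> set xs. y \<le> x'} \<le> card {y \<in> set xs. y \<le> x}" if "x' \<le> x" for x x'
    using that by (intro card_mono) auto
  then show ?thesis
    using assms mono[OF nth_mem[OF assms(2)], of "xs ! a"] by (auto simp: red_def not_less[symmetric])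
qed

lemma is_perm_red:
  assumes "distinct xs"
  shows "is_perm (length xs) (red xs)"
proof (rule is_permI)
  show "length (red xs) = length xs" by (simp add: red_def)
  show "distinct (red xs)"
    unfolding distinct_conv_nth
  proof (intro allI impI notI)
    fix a b assume ab: "a < length (red xs)" "b < length (red xs)" "a \<noteq> b" "red xs ! a = red xs ! b"
    then have "xs ! a \<noteq> xs ! b" using assms by (simp add: red_def nth_eq_iff_index_eq)
    then show False using ab red_less_iff[of a xs b] red_less_iff[of b xs a]
      by (auto simp: red_def nat_neq_iff)
  qed
  show "set (red xs) \<subseteq> {1..length xs}"
  proof
    fix z assume "z \<in> set (red xs)"
    then obtain x where x: "x \<in> set xs" "z = card {y \<in> set xs. y \<le> x}" by (auto simp: red_def)
    then have "0 < z" by (auto simp: card_gt_0_iff)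
    moreover have "z \<le> card (set xs)" unfolding x(2) by (intro card_mono) auto
    ultimately show "z \<in> {1..length xs}" using distinct_card[OF assms] by auto
  qed
qed

lemma less_fact_pred: "4 \<le> n \<Longrightarrow> n < fact (n - 1)"
proof -
  assume "4 \<le> n"
  then obtain m where m: "n = m + 4" by (metis add.commute le_iff_add)
  have "fact (n - 1) = (m + 3) * ((m + 2) * fact (m + 1))" by (simp add: m numeral_eq_Suc)
  moreover have "(m + 3) * (m + 2) * 1 \<le> (m + 3) * (m + 2) * (fact (m + 1) :: nat)"
    by (intro mult_le_mono2 fact_ge_1)
  ultimately show ?thesis by (simp add: m algebra_simps)
qed

lemma exists_odd_threshold:
  fixes g :: "'a \<Rightarrow> nat"
  assumes "finite I" "\<And>l. l \<in> I \<Longrightarrow> 1 \<le> g l"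
    and "\<And>l l'. l \<in> I \<Longrightarrow> l' \<in> I \<Longrightarrow> P l' \<Longrightarrow> g l \<le> g l' \<Longrightarrow> P l"
  shows "\<exists>c. odd c \<and> (\<forall>l\<in>I. 2 * g l < c \<longleftrightarrow> P l)"
proof (cases "{l\<in>I. P l} = {}")
  case True
  then show ?thesis using assms(2) by (intro exI[of _ 1]) force
next
  case False
  define M where "M = Max (g ` {l\<in>I. P l})"
  have fin: "finite (g ` {l\<in>I. P l})" using assms(1) by simp
  obtain l0 where l0: "l0 \<in> I" "P l0" "g l0 = M"
    using Max_in[OF fin] False M_def by auto
  have "2 * g l < 2 * M + 1 \<longleftrightarrow> P l" if "l \<in> I" for l
    using assms(3)[OF that l0(1,2)] Max_ge[OF fin] that l0(3) by (fastforce simp: M_def)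
  then show ?thesis by (intro exI[of _ "2 * M + 1"]) auto
qed

section \<open>Windows of a word with one hole\<close>

text \<open>A word with a single hole is encoded by the position \<open>d\<close> of the hole and the letters
  \<open>val k\<close> at the other positions \<open>k\<close>; windows are indexed by their first position.\<close>

definition covers_at :: "nat \<Rightarrow> nat \<Rightarrow> (nat \<Rightarrow> nat) \<Rightarrow> nat \<Rightarrow> nat list \<Rightarrow> bool" where
  "covers_at n d val i p \<longleftrightarrow> length p = n \<and>
     (\<forall>a<n. \<forall>b<n. i + a \<noteq> d \<longrightarrow> i + b \<noteq> d \<longrightarrow> (p ! a < p ! b \<longleftrightarrow> val (i + a) < val (i + b)))"

lemma covers_atD:
  "covers_at n d val i p \<Longrightarrow> a < n \<Longrightarrow> b < n \<Longrightarrow> i + a \<noteq> d \<Longrightarrow> i + b \<noteq> d \<Longrightarrow>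
     p ! a < p ! b \<longleftrightarrow> val (i + a) < val (i + b)"
  by (simp add: covers_at_def)

lemma covers_atI:
  "length p = n \<Longrightarrow>
   (\<And>a b. a < n \<Longrightarrow> b < n \<Longrightarrow> i + a \<noteq> d \<Longrightarrow> i + b \<noteq> d \<Longrightarrow>
      p ! a < p ! b \<longleftrightarrow> val (i + a) < val (i + b)) \<Longrightarrow>
   covers_at n d val i p"
  by (simp add: covers_at_def)

lemma covers_at_rev:
  assumes "i + n \<le> N" "d < N"
  shows "covers_at n (N - 1 - d) (\<lambda>k. val (N - 1 - k)) i p \<longleftrightarrow> covers_at n d val (N - n - i) (rev p)"
    (is "?L \<longleftrightarrow> ?R")
proof -
  have pos: "N - n - i + (n - 1 - a) = N - 1 - (i + a)"
    "N - n - i + (n - 1 - a) = d \<longleftrightarrow> i + a = N - 1 - d" if "a < n" for a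
    using that assms by auto
  have flip: "n - 1 - (n - 1 - a) = a" if "a < n" for a using that by simp
  show ?thesis
  proof
    assume L: ?L
    show ?R
    proof (rule covers_atI)
      show "length (rev p) = n" using L by (simp add: covers_at_def)
      fix a b assume "a < n" "b < n" "N - n - i + a \<noteq> d" "N - n - i + b \<noteq> d"
      then show "rev p ! a < rev p ! b \<longleftrightarrow> val (N - n - i + a) < val (N - n - i + b)"
        using covers_atD[OF L, of "n - 1 - a" "n - 1 - b"] pos[of "n - 1 - a"] pos[of "n - 1 - b"]
          flip L by (auto simp: rev_nth covers_at_def)
    qed
  next
    assume R: ?R
    show ?L
    proof (rule covers_atI)
      show "length p = n" using R by (simp add: covers_at_def)
      fix a b assume "a < n" "b < n" "i + a \<noteq> N - 1 - d" "i + b \<noteq> N - 1 - d"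
      then show "p ! a < p ! b \<longleftrightarrow> val (N - 1 - (i + a)) < val (N - 1 - (i + b))"
        using covers_atD[OF R, of "n - 1 - a" "n - 1 - b"] pos[of a] pos[of b] R
        by (auto simp: rev_nth covers_at_def)
    qed
  qed
qed

locale one_hole_upword =
  fixes n N d :: nat and val :: "nat \<Rightarrow> nat"
  assumes n_ge_3: "3 \<le> n" and n_le_N: "n \<le> N" and hole_less_N: "d < N"
    and inj_on_window: "\<And>i. i + n \<le> N \<Longrightarrow> inj_on val ({i..<i + n} - {d})"
    and covered_once: "\<And>p. is_perm n p \<Longrightarrow> \<exists>!i. i + n \<le> N \<and> covers_at n d val i p"
begin

abbreviation window_covers :: "nat \<Rightarrow> nat list \<Rightarrow> bool" where
  "window_covers i p \<equiv> covers_at n d val i p"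

lemma window_covers_unique:
  "is_perm n p \<Longrightarrow> i + n \<le> N \<Longrightarrow> window_covers i p \<Longrightarrow> j + n \<le> N \<Longrightarrow> window_covers j p \<Longrightarrow> i = j"
  using covered_once by blast

lemma window_covers_exists:
  assumes "is_perm n p"
  obtains i where "i + n \<le> N" "window_covers i p"
  using covered_once[OF assms] by blast

lemma val_eq_iff:
  assumes "i + n \<le> N" "k \<in> {i..<i + n} - {d}" "k' \<in> {i..<i + n} - {d}"
  shows "val k = val k' \<longleftrightarrow> k = k'"
  by (rule inj_on_eq_iff[OF inj_on_window[OF assms(1)] assms(2,3)])

definition hole_free :: "nat \<Rightarrow> bool" where
  "hole_free i \<longleftrightarrow> d \<notin> {i..<i + n}"

definition std_window :: "nat \<Rightarrow> nat list" where
  "std_window i = red (map val [i..<i + n])"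

lemma std_window_covers:
  assumes "i + n \<le> N" "hole_free i"
  shows "is_perm n (std_window i)" "window_covers i (std_window i)"
proof -
  have "distinct (map val [i..<i + n])"
    using inj_on_window[OF assms(1)] assms(2) by (simp add: distinct_map hole_free_def)
  then show "is_perm n (std_window i)"
    using is_perm_red by (fastforce simp: std_window_def)
  show "window_covers i (std_window i)"
    by (rule covers_atI) (simp_all add: std_window_def red_less_iff, simp add: red_def)
qed

lemma card_window_covers_hole_free:
  assumes "hole_free i"
  shows "card {p. is_perm n p \<and> window_covers i p} \<le> 1"
proof -
  have "p = q" if "is_perm n p" "is_perm n q" "window_covers i p" "window_covers i q" for p q
  proof (rule is_perm_eqI[OF that(1,2)])
    fix a b assume "a < n" "b < n"
    moreover from this have "i + a \<noteq> d" "i + b \<noteq> d" using assms by (auto simp: hole_free_def)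
    ultimately show "p ! a < p ! b \<longleftrightarrow> q ! a < q ! b"
      using covers_atD[OF that(3)] covers_atD[OF that(4)] by simp
  qed
  moreover have "finite {p. is_perm n p \<and> window_covers i p}"
    using finite_is_perm by (rule rev_finite_subset) auto
  ultimately show ?thesis by (auto simp: card_le_Suc0_iff_eq)
qed

lemma window_covers_hole_entry_less_iff:
  assumes p: "is_perm n p" "window_covers i p" and k: "i + k = d" "k < n"
    and b: "b < n" "i + b \<noteq> d"
  shows "p ! k < p ! b \<longleftrightarrow> p ! k \<le> card {m. m < n \<and> i + m \<noteq> d \<and> val (i + m) \<le> val (i + b)}"
proof -
  let ?S = "{m. m < n \<and> m \<noteq> k \<and> p ! m \<le> p ! b}"
  have "p ! m \<le> p ! b \<longleftrightarrow> val (i + m) \<le> val (i + b)" if "m < n" "i + m \<noteq> d" for m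
    using covers_atD[OF p(2) b(1) that(1) b(2) that(2)] by (simp add: not_less[symmetric])
  then have S: "{m. m < n \<and> i + m \<noteq> d \<and> val (i + m) \<le> val (i + b)} = ?S"
    using k by auto
  have "k \<noteq> b" using k b by auto
  then have ne: "p ! k \<noteq> p ! b" using is_perm_nth_eq_iff[OF p(1) k(2) b(1)] by simp
  have "{m. m < n \<and> p ! m \<le> p ! b} = (if p ! k \<le> p ! b then insert k ?S else ?S)"
    using k by auto
  then have "p ! b = (if p ! k \<le> p ! b then Suc (card ?S) else card ?S)"
    using is_perm_nth_eq_card[OF p(1) b(1)] by (simp split: if_splits)
  then show ?thesis using S ne by (auto split: if_splits)
qed

text \<open>The entry at the hole determines all its comparisons with the other entries, whose order is
  fixed by the window.\<close>

lemma card_window_covers_le: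
  assumes "d \<in> {i..<i + n}"
  shows "card {p. is_perm n p \<and> window_covers i p} \<le> n"
proof -
  let ?S = "{p. is_perm n p \<and> window_covers i p}"
  define k where "k = d - i"
  have k: "i + k = d" "k < n" using assms by (auto simp: k_def)
  have "inj_on (\<lambda>p. p ! k) ?S"
  proof (rule inj_onI)
    fix p q assume p: "p \<in> ?S" and q: "q \<in> ?S" and eq: "p ! k = q ! k"
    have hole: "p ! k < p ! b \<longleftrightarrow> q ! k < q ! b" if "b < n" "i + b \<noteq> d" for b
      using window_covers_hole_entry_less_iff[OF _ _ k that, of p]
        window_covers_hole_entry_less_iff[OF _ _ k that, of q] p q eq by simp
    show "p = q"
    proof (rule is_perm_eqI)
      fix a b assume ab: "a < n" "b < n"
      have flip: "r ! a < r ! b \<longleftrightarrow> \<not> r ! b < r ! a" if "is_perm n r" "a \<noteq> b" for r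
        using is_perm_nth_eq_iff[OF that(1) ab] that(2) by (metis less_asym linorder_neqE_nat)
      show "p ! a < p ! b \<longleftrightarrow> q ! a < q ! b"
        using hole[of a] hole[of b] covers_atD[of n d val i _ a b] flip[of p] flip[of q] p q ab k
        by (cases "i + a = d"; cases "i + b = d") auto
    qed (use p q in auto)
  qed
  moreover have "(\<lambda>p. p ! k) ` ?S \<subseteq> {1..n}" using is_perm_nth_in k(2) by auto
  ultimately show ?thesis using card_inj_on_le[of _ ?S "{1..n}"] by fastforce
qed

lemma fact_le_card_windows:
  assumes "\<And>i. i + n \<le> N \<Longrightarrow> d \<in> {i..<i + n}"
  shows "fact (n - 1) \<le> N - n + 1"
proof -
  let ?C = "\<lambda>i. {p. is_perm n p \<and> window_covers i p}"
  have "{p. is_perm n p} \<subseteq> (\<Union>i\<le>N - n. ?C i)"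
    using window_covers_exists by fastforce
  moreover have "finite (\<Union>i\<le>N - n. ?C i)"
    using finite_is_perm by (rule rev_finite_subset) auto
  ultimately have "fact n \<le> card (\<Union>i\<le>N - n. ?C i)"
    by (metis card_is_perm card_mono)
  also have "\<dots> \<le> (\<Sum>i\<le>N - n. card (?C i))" by (rule card_UN_le) simp
  also have "\<dots> \<le> (\<Sum>i\<le>N - n. n)"
    using assms card_window_covers_le n_le_N by (intro sum_mono) auto
  also have "\<dots> = n * (N - n + 1)" by simp
  finally have "n * fact (n - 1) \<le> n * (N - n + 1)"
    using n_ge_3 fact_reduce[of n, where 'a = nat] by simp
  then show ?thesis using n_ge_3 by (simp only: mult_le_cancel1)
qed

lemma odd_slot_for_letter_before:
  assumes j: "1 \<le> j" "j + n \<le> N" "j - 1 \<noteq> d" and q: "is_perm n q" "window_covers j q"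
  obtains c where "odd c"
    "\<And>l. l < n - 1 \<Longrightarrow> j + l \<noteq> d \<Longrightarrow> 2 * q ! l < c \<longleftrightarrow> val (j + l) < val (j - 1)"
    "\<And>l. l < n - 1 \<Longrightarrow> j + l \<noteq> d \<Longrightarrow> c < 2 * q ! l \<longleftrightarrow> val (j - 1) < val (j + l)"
proof -
  let ?I = "{l. l < n - 1 \<and> j + l \<noteq> d}"
  have "\<exists>c. odd c \<and> (\<forall>l\<in>?I. 2 * q ! l < c \<longleftrightarrow> val (j + l) < val (j - 1))"
  proof (rule exists_odd_threshold)
    show "1 \<le> q ! l" if "l \<in> ?I" for l using is_perm_nth_in[OF q(1)] that by force
    show "val (j + l) < val (j - 1)"
      if "l \<in> ?I" "l' \<in> ?I" "val (j + l') < val (j - 1)" "q ! l \<le> q ! l'" for l l'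
    proof -
      have "l < n" "l' < n" using that(1,2) by auto
      then show ?thesis
        using that covers_atD[OF q(2), of l l'] is_perm_nth_eq_iff[OF q(1)] by (cases "l = l'") auto
    qed
  qed simp
  then obtain c where c: "odd c" "\<And>l. l \<in> ?I \<Longrightarrow> 2 * q ! l < c \<longleftrightarrow> val (j + l) < val (j - 1)"
    by blast
  have "c < 2 * q ! l \<longleftrightarrow> val (j - 1) < val (j + l)" if "l \<in> ?I" for l
  proof -
    have "j + l \<in> {j - 1..<j - 1 + n} - {d}" "j - 1 \<in> {j - 1..<j - 1 + n} - {d}"
      using that j by auto
    then have "val (j + l) \<noteq> val (j - 1)" using val_eq_iff[of "j - 1"] j by auto
    moreover have "c \<noteq> 2 * q ! l" using c(1) by auto
    ultimately show ?thesis using c(2)[OF that] by (auto simp: nat_neq_iff)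
  qed
  then show thesis using that c by auto
qed

text \<open>The new first letter is an odd number, slotted among the doubled entries of \<open>q\<close> exactly
  where the letter in front of window \<open>j\<close> lies among the letters of window \<open>j\<close>.\<close>

lemma window_covers_extend_left:
  assumes j: "1 \<le> j" "j + n \<le> N" "j - 1 \<noteq> d" and q: "is_perm n q" "window_covers j q"
  obtains p where "is_perm n p" "window_covers (j - 1) p"
    "\<And>a b. 0 < a \<Longrightarrow> a < n \<Longrightarrow> 0 < b \<Longrightarrow> b < n \<Longrightarrow> p ! a < p ! b \<longleftrightarrow> q ! (a - 1) < q ! (b - 1)"
proof -
  obtain c where c: "odd c"
    "\<And>l. l < n - 1 \<Longrightarrow> j + l \<noteq> d \<Longrightarrow> 2 * q ! l < c \<longleftrightarrow> val (j + l) < val (j - 1)"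
    "\<And>l. l < n - 1 \<Longrightarrow> j + l \<noteq> d \<Longrightarrow> c < 2 * q ! l \<longleftrightarrow> val (j - 1) < val (j + l)"
    using odd_slot_for_letter_before[OF assms] by blast
  define xs where "xs = c # map (\<lambda>x. 2 * x) (take (n - 1) q)"
  have len: "length xs = n" using q(1) n_ge_3 by (simp add: xs_def is_perm_def)
  have xs_Suc: "xs ! Suc l = 2 * q ! l" if "l < n - 1" for l
    using that q(1) by (simp add: xs_def is_perm_def)
  have "distinct xs"
    using q(1) c(1) by (auto simp: xs_def is_perm_def distinct_map inj_on_def)
  define p where "p = red xs"
  have p_less: "p ! a < p ! b \<longleftrightarrow> xs ! a < xs ! b" if "a < n" "b < n" for a b
    using red_less_iff len that by (simp add: p_def)
  show thesis
  proof (rule that)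
    show "is_perm n p" using is_perm_red[OF \<open>distinct xs\<close>] len by (simp add: p_def)
    show "p ! a < p ! b \<longleftrightarrow> q ! (a - 1) < q ! (b - 1)" if "0 < a" "a < n" "0 < b" "b < n" for a b
      using p_less[OF that(2,4)] xs_Suc[of "a - 1"] xs_Suc[of "b - 1"] that by simp
    show "window_covers (j - 1) p"
    proof (rule covers_atI)
      show "length p = n" using len by (simp add: p_def red_def)
      fix a b assume ab: "a < n" "b < n" "j - 1 + a \<noteq> d" "j - 1 + b \<noteq> d"
      obtain i where j_eq: "j = Suc i" using j(1) by (cases j) auto
      consider "a = 0" "b = 0" | l where "a = 0" "b = Suc l" "l < n - 1" "j + l \<noteq> d"
        | l where "a = Suc l" "b = 0" "l < n - 1" "j + l \<noteq> d"
        | l l' where "a = Suc l" "b = Suc l'" "l < n - 1" "l' < n - 1" "j + l \<noteq> d" "j + l' \<noteq> d"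
        using ab j(1) by (cases a; cases b) auto
      then have "xs ! a < xs ! b \<longleftrightarrow> val (j - 1 + a) < val (j - 1 + b)"
      proof cases
        case (2 l)
        then show ?thesis using c(3)[OF 2(3,4)] xs_Suc[of l] by (simp add: j_eq xs_def)
      next
        case (3 l)
        then show ?thesis using c(2)[OF 3(3,4)] xs_Suc[of l] by (simp add: j_eq xs_def)
      next
        case (4 l l')
        then show ?thesis
          using covers_atD[OF q(2), of l l'] xs_Suc[of l] xs_Suc[of l'] by (simp add: j_eq)
      qed simp
      then show "p ! a < p ! b \<longleftrightarrow> val (j - 1 + a) < val (j - 1 + b)" using p_less ab by simp
    qed
  qed
qed

lemma reversed: "one_hole_upword n N (N - 1 - d) (\<lambda>k. val (N - 1 - k))"
proof
  show "3 \<le> n" "n \<le> N" "N - 1 - d < N" using n_ge_3 n_le_N hole_less_N by auto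
next
  fix i assume i: "i + n \<le> N"
  have "inj_on (\<lambda>k. N - 1 - k) ({i..<i + n} - {N - 1 - d})" by (rule inj_onI) (use i in auto)
  moreover have "(\<lambda>k. N - 1 - k) ` ({i..<i + n} - {N - 1 - d}) \<subseteq> {N - n - i..<N - n - i + n} - {d}"
    using i hole_less_N by auto
  ultimately show "inj_on (\<lambda>k. val (N - 1 - k)) ({i..<i + n} - {N - 1 - d})"
    using inj_on_window[of "N - n - i"] i
    by (auto intro: comp_inj_on[unfolded comp_def] inj_on_subset)
next
  fix p assume "is_perm n p"
  then obtain j where j: "j + n \<le> N" "window_covers j (rev p)"
    "\<And>j'. j' + n \<le> N \<Longrightarrow> window_covers j' (rev p) \<Longrightarrow> j' = j"
    using covered_once[of "rev p"] by auto
  show "\<exists>!i. i + n \<le> N \<and> covers_at n (N - 1 - d) (\<lambda>k. val (N - 1 - k)) i p"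
  proof (rule ex1I[of _ "N - n - j"])
    show "N - n - j + n \<le> N \<and> covers_at n (N - 1 - d) (\<lambda>k. val (N - 1 - k)) (N - n - j) p"
      using covers_at_rev[of "N - n - j" n N d] j(1,2) hole_less_N n_le_N by auto
  next
    fix i assume "i + n \<le> N \<and> covers_at n (N - 1 - d) (\<lambda>k. val (N - 1 - k)) i p"
    then show "i = N - n - j"
      using covers_at_rev[of i n N d] j(3)[of "N - n - i"] hole_less_N by auto
  qed
qed

end

section \<open>The window starting at the hole\<close>

locale window_at_hole = one_hole_upword +
  assumes window_at_hole: "d + n \<le> N"
begin

definition after_hole_pattern :: "nat list \<Rightarrow> bool" where
  "after_hole_pattern q \<longleftrightarrow>
     (\<forall>a<n - 1. \<forall>b<n - 1. q ! a < q ! b \<longleftrightarrow> val (d + 1 + a) < val (d + 1 + b))"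

lemma window_covers_hole_if_shifted:
  assumes "length p = n" "after_hole_pattern q"
    and "\<And>a b. 0 < a \<Longrightarrow> a < n \<Longrightarrow> 0 < b \<Longrightarrow> b < n \<Longrightarrow> p ! a < p ! b \<longleftrightarrow> q ! (a - 1) < q ! (b - 1)"
  shows "window_covers d p"
proof (rule covers_atI[OF assms(1)])
  fix a b assume ab: "a < n" "b < n" "d + a \<noteq> d" "d + b \<noteq> d"
  then have "q ! (a - 1) < q ! (b - 1) \<longleftrightarrow> val (d + 1 + (a - 1)) < val (d + 1 + (b - 1))"
    using assms(2) unfolding after_hole_pattern_def by simp
  then show "p ! a < p ! b \<longleftrightarrow> val (d + a) < val (d + b)" using assms(3)[of a b] ab by simp
qed

lemma after_hole_pattern_window:
  assumes "is_perm n q" "after_hole_pattern q" "j + n \<le> N" "window_covers j q"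
  shows "j = 0 \<or> j = d + 1"
proof (rule ccontr)
  assume "\<not> (j = 0 \<or> j = d + 1)"
  then have j: "1 \<le> j" "j - 1 \<noteq> d" by auto
  obtain p where p: "is_perm n p" "window_covers (j - 1) p"
    "\<And>a b. 0 < a \<Longrightarrow> a < n \<Longrightarrow> 0 < b \<Longrightarrow> b < n \<Longrightarrow> p ! a < p ! b \<longleftrightarrow> q ! (a - 1) < q ! (b - 1)"
    using window_covers_extend_left[OF j(1) assms(3) j(2) assms(1,4)] by blast
  have "window_covers d p"
    using window_covers_hole_if_shifted[OF _ assms(2) p(3)] p(1) by (simp add: is_perm_def)
  then have "j - 1 = d" using window_covers_unique[OF p(1) _ p(2) window_at_hole] assms(3) by simp
  with j(2) show False ..
qed

definition pattern_perm :: "nat \<Rightarrow> nat list" where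
  "pattern_perm s = map (\<lambda>x. if x < s then x else Suc x) (red (map val [d + 1..<d + n])) @ [s]"

lemma pattern_perm:
  assumes "s \<in> {1..n}"
  shows "is_perm n (pattern_perm s)" "after_hole_pattern (pattern_perm s)"
    "pattern_perm s ! (n - 1) = s"
proof -
  let ?ys = "map val [d + 1..<d + n]" and ?ins = "\<lambda>x. if x < s then x else Suc x"
  have "inj_on val (set [d + 1..<d + n])"
    using inj_on_window[OF window_at_hole] by (rule inj_on_subset) auto
  then have r: "is_perm (n - 1) (red ?ys)" using is_perm_red[of ?ys] by (simp add: distinct_map)
  have ins_less: "?ins x < ?ins y \<longleftrightarrow> x < y" for x y by auto
  have nth_lt: "pattern_perm s ! a = ?ins (red ?ys ! a)" if "a < n - 1" for a
    using that r by (simp add: pattern_perm_def nth_append is_perm_def)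
  show "pattern_perm s ! (n - 1) = s"
    using r by (simp add: pattern_perm_def nth_append is_perm_def)
  have "pattern_perm s ! a < pattern_perm s ! b \<longleftrightarrow> val (d + 1 + a) < val (d + 1 + b)"
    if "a < n - 1" "b < n - 1" for a b
  proof -
    have "pattern_perm s ! a < pattern_perm s ! b \<longleftrightarrow> red ?ys ! a < red ?ys ! b"
      by (simp only: nth_lt[OF that(1)] nth_lt[OF that(2)] ins_less)
    also have "\<dots> \<longleftrightarrow> ?ys ! a < ?ys ! b" using that by (intro red_less_iff) auto
    finally show ?thesis using that by (simp add: add.assoc)
  qed
  then show "after_hole_pattern (pattern_perm s)" by (simp add: after_hole_pattern_def)
  show "is_perm n (pattern_perm s)"
  proof (rule is_permI)
    show "length (pattern_perm s) = n" using r n_ge_3 by (simp add: pattern_perm_def is_perm_def)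
    have "inj_on ?ins (set (red ?ys))" by (auto simp: inj_on_def split: if_splits)
    then show "distinct (pattern_perm s)" using r by (auto simp: pattern_perm_def is_perm_def distinct_map)
    show "set (pattern_perm s) \<subseteq> {1..n}" using r assms by (auto simp: pattern_perm_def is_perm_def)
  qed
qed

text \<open>With the hole at \<open>0\<close>, window \<open>0\<close> and the pattern force every two consecutive entries of
  \<open>q\<close> to compare like \<open>val 1\<close> and \<open>val 2\<close>, so \<open>q\<close> is monotone.\<close>

lemma after_hole_pattern_monotone:
  assumes "d = 0" "is_perm n q" "after_hole_pattern q" "window_covers 0 q" "a < b" "b < n"
  shows "q ! a < q ! b \<longleftrightarrow> val 1 < val 2"
proof -
  have step: "q ! a < q ! Suc a \<longleftrightarrow> val 1 < val 2" if "Suc a < n" for a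
    using that
  proof (induction a)
    case 0
    have "q ! 0 < q ! 1 \<longleftrightarrow> val (d + 1 + 0) < val (d + 1 + 1)"
      using assms(3) n_ge_3 unfolding after_hole_pattern_def by simp
    then show ?case using assms(1) by (simp add: numeral_2_eq_2)
  next
    case (Suc a)
    have "q ! Suc a < q ! Suc (Suc a) \<longleftrightarrow> val (Suc a) < val (Suc (Suc a))"
      using covers_atD[OF assms(4), of "Suc a" "Suc (Suc a)"] Suc.prems assms(1) by simp
    also have "\<dots> \<longleftrightarrow> q ! a < q ! Suc a"
      using assms(3)[unfolded after_hole_pattern_def] Suc.prems assms(1) by simp
    finally show ?case using Suc by simp
  qed
  show ?thesis using assms(5,6)
  proof (induction b)
    case (Suc b)
    have "q ! b \<noteq> q ! Suc b" using is_perm_nth_eq_iff[OF assms(2)] Suc.prems by simp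
    then show ?case using Suc step[of b] by (cases "a = b") auto
  qed simp
qed

lemma after_hole_pattern_unique:
  assumes "d = 0" and q: "is_perm n q" "after_hole_pattern q" "window_covers 0 q"
    and q': "is_perm n q'" "after_hole_pattern q'" "window_covers 0 q'"
  shows "q = q'"
proof (rule is_perm_eqI[OF q(1) q'(1)])
  fix a b assume ab: "a < n" "b < n"
  have "q ! a \<noteq> q ! b" "q' ! a \<noteq> q' ! b" if "a \<noteq> b"
    using that ab is_perm_nth_eq_iff[OF q(1)] is_perm_nth_eq_iff[OF q'(1)] by auto
  then show "q ! a < q ! b \<longleftrightarrow> q' ! a < q' ! b"
    using after_hole_pattern_monotone[OF assms(1) q, of a b] after_hole_pattern_monotone[OF assms(1) q', of a b]
      after_hole_pattern_monotone[OF assms(1) q, of b a] after_hole_pattern_monotone[OF assms(1) q', of b a] ab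
    by (cases a b rule: linorder_cases) auto
qed

text \<open>Window \<open>0\<close> fixes all comparisons avoiding position \<open>d\<close>, the pattern all comparisons
  avoiding position \<open>n - 1\<close>; only the pair \<open>(d, n - 1)\<close> is left open.\<close>

lemma card_after_hole_pattern_le_2:
  assumes "1 \<le> d" "d \<le> n - 2"
  shows "card {q. is_perm n q \<and> after_hole_pattern q \<and> window_covers 0 q} \<le> 2"
proof -
  let ?S = "{q. is_perm n q \<and> after_hole_pattern q \<and> window_covers 0 q}"
  have dn: "d < n - 1" "n - 1 < n" using assms n_ge_3 by auto
  have "inj_on (\<lambda>q. q ! d < q ! (n - 1)) ?S"
  proof (rule inj_onI)
    fix q q' assume q: "q \<in> ?S" and q': "q' \<in> ?S" and eq: "(q ! d < q ! (n - 1)) = (q' ! d < q' ! (n - 1))"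
    have ne: "r ! d \<noteq> r ! (n - 1)" if "is_perm n r" for r
      using is_perm_nth_eq_iff[OF that] dn by simp
    have eq': "q ! (n - 1) < q ! d \<longleftrightarrow> q' ! (n - 1) < q' ! d"
      using eq ne[of q] ne[of q'] q q' by (auto simp: nat_neq_iff)
    show "q = q'"
    proof (rule is_perm_eqI)
      fix a b assume ab: "a < n" "b < n"
      consider "a \<noteq> d" "b \<noteq> d" | "a < n - 1" "b < n - 1" | "a = d" "b = n - 1" | "a = n - 1" "b = d"
        using ab dn by force
      then show "q ! a < q ! b \<longleftrightarrow> q' ! a < q' ! b"
      proof cases
        case 1
        then show ?thesis using q q' ab covers_atD[of n d val 0 _ a b] by simp
      next
        case 2
        then show ?thesis using q q' by (simp add: after_hole_pattern_def)
      qed (use eq eq' in simp_all)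
    qed (use q q' in auto)
  qed
  then have "card ?S \<le> card (UNIV :: bool set)" by (rule card_inj_on_le) auto
  then show ?thesis by simp
qed

lemma no_after_hole_pattern_if_hole_last:
  assumes "4 \<le> n" "d = n - 1" "is_perm n q" "after_hole_pattern q" "window_covers 0 q"
  shows False
proof (cases "d + 1 + n \<le> N")
  case True
  have free: "hole_free (d + 1)" by (simp add: hole_free_def)
  let ?p = "std_window (d + 1)"
  have "window_covers 0 ?p"
  proof (rule covers_atI)
    show "length ?p = n" using std_window_covers(1)[OF True free] by (simp add: is_perm_def)
    fix a b assume ab: "a < n" "b < n" "0 + a \<noteq> d" "0 + b \<noteq> d"
    then have "a < n - 1" "b < n - 1" using assms(2) by auto
    then show "?p ! a < ?p ! b \<longleftrightarrow> val (0 + a) < val (0 + b)"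
      using covers_atD[OF std_window_covers(2)[OF True free], of a b]
        covers_atD[OF assms(5), of a b] assms(4) ab by (simp add: after_hole_pattern_def)
  qed
  then have "d + 1 = 0"
    using window_covers_unique[OF std_window_covers(1)[OF True free] True std_window_covers(2)[OF True free],
        of 0] n_le_N by simp
  then show False by simp
next
  case False
  then have "fact (n - 1) \<le> N - n + 1"
    using assms(2) window_at_hole n_ge_3 by (intro fact_le_card_windows) auto
  then show False using False window_at_hole assms(1,2) less_fact_pred[OF assms(1)] by simp
qed

lemma card_after_hole_pattern_less:
  assumes "n = 3 \<Longrightarrow> d = 0"
  shows "card {q. is_perm n q \<and> after_hole_pattern q \<and> window_covers 0 q} < n - 1"
proof -
  let ?S = "{q. is_perm n q \<and> after_hole_pattern q \<and> window_covers 0 q}"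
  have fin: "finite ?S" using finite_is_perm by (rule rev_finite_subset) auto
  consider "n \<le> d" | "d = 0" | "1 \<le> d" "d \<le> n - 2" | "d = n - 1" by linarith
  then show ?thesis
  proof cases
    case 1
    then have "card ?S \<le> card {p. is_perm n p \<and> window_covers 0 p}"
      by (intro card_mono) (use finite_is_perm in \<open>auto intro: rev_finite_subset\<close>)
    also have "\<dots> \<le> 1" using 1 by (intro card_window_covers_hole_free) (simp add: hole_free_def)
    finally show ?thesis using n_ge_3 by simp
  next
    case 2
    then have "card ?S \<le> 1" using fin after_hole_pattern_unique by (simp add: card_le_Suc0_iff_eq)
    then show ?thesis using n_ge_3 by simp
  next
    case 3
    then show ?thesis using card_after_hole_pattern_le_2[OF 3] assms n_ge_3 by fastforce
  next
    case 4
    then have "4 \<le> n" using assms n_ge_3 by (cases "n = 3") auto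
    then have "?S = {}" using no_after_hole_pattern_if_hole_last 4 by blast
    then have "card ?S = 0" by (simp only: card.empty)
    then show ?thesis using n_ge_3 by simp
  qed
qed

lemma hole_at_0_if_n_eq_3:
  assumes "n = 3"
  shows "d = 0"
proof (rule ccontr)
  assume "d \<noteq> 0"
  have "val (d + 1) \<noteq> val (d + 2)"
    using val_eq_iff[OF window_at_hole, of "d + 1" "d + 2"] assms by simp
  define q :: "nat list" where "q = (if val (d + 1) < val (d + 2) then [1, 2, 3] else [3, 2, 1])"
  have q: "is_perm n q" using assms by (auto simp: q_def intro!: is_permI)
  have pattern: "after_hole_pattern q"
    unfolding after_hole_pattern_def
  proof (intro allI impI)
    fix a b assume "a < n - 1" "b < n - 1"
    then have "a \<in> {0, 1}" "b \<in> {0, 1}" using assms by auto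
    then show "q ! a < q ! b \<longleftrightarrow> val (d + 1 + a) < val (d + 1 + b)"
      using \<open>val (d + 1) \<noteq> val (d + 2)\<close> by (auto simp: q_def)
  qed
  have "window_covers d q"
  proof (rule covers_atI)
    show "length q = n" using assms by (simp add: q_def)
    fix a b assume "a < n" "b < n" "d + a \<noteq> d" "d + b \<noteq> d"
    then have "a \<in> {1, 2}" "b \<in> {1, 2}" using assms by auto
    then show "q ! a < q ! b \<longleftrightarrow> val (d + a) < val (d + b)"
      using \<open>val (d + 1) \<noteq> val (d + 2)\<close> by (auto simp: q_def)
  qed
  moreover have d: "1 \<le> d" "d - 1 \<noteq> d" using \<open>d \<noteq> 0\<close> by auto
  ultimately obtain p where p: "is_perm n p" "window_covers (d - 1) p"
    "\<And>a b. 0 < a \<Longrightarrow> a < n \<Longrightarrow> 0 < b \<Longrightarrow> b < n \<Longrightarrow> p ! a < p ! b \<longleftrightarrow> q ! (a - 1) < q ! (b - 1)"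
    using window_covers_extend_left[OF d(1) window_at_hole d(2) q] by blast
  have "window_covers d p"
    using window_covers_hole_if_shifted[OF _ pattern p(3)] p(1) by (simp add: is_perm_def)
  then have "d - 1 = d" using window_covers_unique[OF p(1) _ p(2) window_at_hole] window_at_hole by simp
  with \<open>d \<noteq> 0\<close> show False by simp
qed

lemma impossible: False
proof -
  let ?A0 = "{q. is_perm n q \<and> after_hole_pattern q \<and> window_covers 0 q}"
  let ?A1 = "{p. is_perm n p \<and> window_covers (d + 1) p}"
  have "pattern_perm ` {1..n} \<subseteq> ?A0 \<union> ?A1"
  proof
    fix q assume "q \<in> pattern_perm ` {1..n}"
    then have q: "is_perm n q" "after_hole_pattern q" using pattern_perm by auto
    obtain j where "j + n \<le> N" "window_covers j q" using window_covers_exists[OF q(1)] .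
    then show "q \<in> ?A0 \<union> ?A1" using after_hole_pattern_window[OF q] q by auto
  qed
  moreover have "finite (?A0 \<union> ?A1)" using finite_is_perm by (rule rev_finite_subset) auto
  ultimately have "card (pattern_perm ` {1..n}) \<le> card (?A0 \<union> ?A1)" by (intro card_mono)
  moreover have "inj_on pattern_perm {1..n}"
    by (rule inj_on_inverseI[where g = "\<lambda>q. q ! (n - 1)"]) (rule pattern_perm(3))
  ultimately have "n \<le> card (?A0 \<union> ?A1)" by (simp add: card_image)
  also have "\<dots> \<le> card ?A0 + card ?A1" by (rule card_Un_le)
  also have "card ?A1 \<le> 1" by (rule card_window_covers_hole_free) (simp add: hole_free_def)
  finally show False using card_after_hole_pattern_less[OF hole_at_0_if_n_eq_3] by linarith
qed

end

section \<open>Upwords with one hole\<close>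

lemma (in one_hole_upword) impossible: False
proof (cases "d + n \<le> N")
  case True
  interpret W: window_at_hole n N d val by unfold_locales (fact True)
  show False by (rule W.impossible)
next
  case no_window: False
  show False
  proof (cases "n - 1 \<le> d")
    case True
    interpret R: window_at_hole n N "N - 1 - d" "\<lambda>k. val (N - 1 - k)"
      by (intro window_at_hole.intro reversed window_at_hole_axioms.intro)
        (use True hole_less_N in auto)
    show False by (rule R.impossible)
  next
    case False
    then have "fact (n - 1) \<le> N - n + 1" using no_window by (intro fact_le_card_windows) auto
    moreover have "N - n + 1 < n - 1" using False no_window n_le_N by auto
    ultimately show False using fact_ge_self[of "n - 1"] by linarith
  qed
qed

lemma count_list_eq_1_obtain:
  assumes "count_list xs x = 1"
  obtains d where "d < length xs" "\<And>k. k < length xs \<Longrightarrow> xs ! k = x \<longleftrightarrow> k = d"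
proof -
  obtain pref rest where xs: "xs = pref @ x # rest" "x \<notin> set pref" "count_list rest x = 0"
    using count_list_Suc_split_first[of xs x 0] assms by auto
  have "xs ! k = x \<longleftrightarrow> k = length pref" if "k < length xs" for k
    using xs that by (auto simp: nth_append nth_Cons' count_list_0_iff dest: nth_mem)
  then show thesis using that[of "length pref"] xs(1) by simp
qed

lemma covers_factor_iff_covers_at:
  assumes "i + n \<le> length u" "int_letters_distinct (factor u n i)"
    and hole: "\<And>k. k < length u \<Longrightarrow> u ! k = None \<longleftrightarrow> k = d"
  shows "covers (factor u n i) p \<longleftrightarrow> covers_at n d (\<lambda>k. the (u ! k)) i p"
proof -
  have len: "length (factor u n i) = n" using assms(1) by (simp add: factor_def)
  have nth: "factor u n i ! a = (if i + a = d then None else Some (the (u ! (i + a))))" if "a < n" for a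
    using that assms(1) hole[of "i + a"] by (auto simp: factor_def)
  show ?thesis
    unfolding covers_def covers_at_def using assms(2) len nth by (auto simp: eq_commute)
qed

lemma one_hole_upword_of_is_upword:
  assumes "3 \<le> n" "is_upword n u" "count_list u None = 1"
  obtains d where "one_hole_upword n (length u) d (\<lambda>k. the (u ! k))"
proof -
  obtain d where d: "d < length u" "\<And>k. k < length u \<Longrightarrow> u ! k = None \<longleftrightarrow> k = d"
    using count_list_eq_1_obtain[OF assms(3)] by blast
  have distinct: "int_letters_distinct (factor u n i)" if "i + n \<le> length u" for i
    using assms(2) that by (simp add: is_upword_def)
  have "one_hole_upword n (length u) d (\<lambda>k. the (u ! k))"
  proof
    show "3 \<le> n" "n \<le> length u" "d < length u" using assms d by (auto simp: is_upword_def)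
  next
    fix i assume i: "i + n \<le> length u"
    show "inj_on (\<lambda>k. the (u ! k)) ({i..<i + n} - {d})"
    proof (rule inj_onI)
      fix k k' assume k: "k \<in> {i..<i + n} - {d}" "k' \<in> {i..<i + n} - {d}"
        and eq: "the (u ! k) = the (u ! k')"
      have "factor u n i ! (k - i) = u ! k" "factor u n i ! (k' - i) = u ! k'"
        "k - i < length (factor u n i)" "k' - i < length (factor u n i)"
        using k i by (auto simp: factor_def)
      moreover have "u ! k \<noteq> None" "u ! k = u ! k'" using k i d(2) eq by (auto simp: option.expand)
      ultimately have "k - i = k' - i"
        using distinct[OF i, unfolded int_letters_distinct_def] by metis
      then show "k = k'" using k by auto
    qed
  next
    fix p assume "is_perm n p"
    then have "\<exists>!i. i + n \<le> length u \<and> covers (factor u n i) p"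
      using assms(2) by (simp add: is_upword_def)
    moreover have "i + n \<le> length u \<and> covers (factor u n i) p \<longleftrightarrow>
        i + n \<le> length u \<and> covers_at n d (\<lambda>k. the (u ! k)) i p" for i
      using covers_factor_iff_covers_at[OF _ distinct d(2)] by blast
    ultimately show "\<exists>!i. i + n \<le> length u \<and> covers_at n d (\<lambda>k. the (u ! k)) i p"
      by simp
  qed
  then show thesis by (rule that)
qed

theorem corollary4:
  fixes n :: nat
  assumes "n \<ge> 3"
  shows "\<not> (\<exists>u. is_upword n u \<and> count_list u None = 1)"
proof
  assume "\<exists>u. is_upword n u \<and> count_list u None = 1"
  then obtain u d where "one_hole_upword n (length u) d (\<lambda>k. the (u ! k))"
    using one_hole_upword_of_is_upword assms by metis
  then show False by (rule one_hole_upword.impossible)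
qed

end
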